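(* Consider the two-type Bellman–Harris process described in the context. Let $H(t),k_1(t),k_2(t)$ be nonnegative functions on $[0,\infty)$ with $\lim_{t\to\infty}k_i(t)=0$ ($i=1,2$) and $\lim_{t\to\infty}H(t)=\infty$. Suppose $$\lim_{t\to\infty}H(t)\mathbf{Q}(t;1-\lambda_1k_1(t),1-\lambda_2k_2(t))=\mathbf{h}(\lambda_1,\lambda_2),\quad\lambda_1\ge0,\ \lambda_2\ge0,$$ for a function $\mathbf{h}=(h_1,h_2)$ whose components are continuous in both arguments. Then $$\lim_{t\to\infty}H(t)\mathbf{Q}(t;e^{-\lambda_1k_3(t)},e^{-\lambda_2k_4(t)})=\mathbf{h}(\lambda_1,\lambda_2)$$ for any functions $k_3,k_4$ with $\lim_{t\to\infty}k_3(t)/k_1(t)=1$ and $\lim_{t\to\infty}k_4(t)/k_2(t)=1$.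
   Context: Two-type Bellman–Harris branching process $\mathbf{Z}(t)=(Z_1(t),Z_2(t))$ (particles of type $i\in\{1,2\}$ have life-length distribution $G_i$ and offspring generating function $f_i(s_1,s_2)$, and evolve independently). For $\mathbf{s}=(s_1,s_2)\in[0,1]^2$, $F_i(t;\mathbf{s})=\mathbf{E}[s_1^{Z_1(t)}s_2^{Z_2(t)}\mid\text{one initial particle of type }i]$ and $\mathbf{Q}(t;\mathbf{s})=(1-F_1(t;\mathbf{s}),1-F_2(t;\mathbf{s}))^\dagger$. *)

theory Defs
  imports "HOL-Probability.Probability"
begin

definition pgf2 :: "(nat \<times> nat) pmf \<Rightarrow> real \<Rightarrow> real \<Rightarrow> real" where
  "pgf2 p s1 s2 = measure_pmf.expectation p (\<lambda>(a, b). s1 ^ a * s2 ^ b)"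

text \<open>Two-type Bellman--Harris process, described through its data:
  G i = life-length distribution of type i (a probability measure on [0,inf)),
  off i = offspring distribution of type i (so f_i = pgf2 (off i)),
  Zd i t = distribution of (Z1(t),Z2(t)) started from one particle of type i,
  so F_i(t;s) = pgf2 (Zd i t) s1 s2.  The family is required to satisfy the
  Bellman--Harris integral equation
  F_i(t;s) = s_i (1 - G_i(t)) + int_[0,t] f_i(F(t-u;s)) dG_i(u).\<close>
definition bellman_harris ::
  "(nat \<Rightarrow> real measure) \<Rightarrow> (nat \<Rightarrow> (nat \<times> nat) pmf) \<Rightarrow> (nat \<Rightarrow> real \<Rightarrow> (nat \<times> nat) pmf) \<Rightarrow> bool" where
  "bellman_harris G off Zd \<longleftrightarrow>
     (\<forall>i\<in>{1,2::nat}.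
        prob_space (G i) \<and> sets (G i) = sets borel \<and> measure (G i) {..<0} = 0 \<and>
        Zd i 0 = return_pmf (if i = 1 then (1, 0) else (0, 1)) \<and>
        (\<forall>t\<ge>0. \<forall>s1\<in>{0..1}. \<forall>s2\<in>{0..1}.
           pgf2 (Zd i t) s1 s2 =
             (if i = 1 then s1 else s2) * (1 - measure (G i) {..t}) +
             (LINT u:{0..t}|G i. pgf2 (off i) (pgf2 (Zd 1 (t - u)) s1 s2) (pgf2 (Zd 2 (t - u)) s1 s2))))"

definition Qvec :: "(nat \<Rightarrow> real \<Rightarrow> (nat \<times> nat) pmf) \<Rightarrow> real \<Rightarrow> real \<Rightarrow> real \<Rightarrow> real \<times> real" where
  "Qvec Zd t s1 s2 = (1 - pgf2 (Zd 1 t) s1 s2, 1 - pgf2 (Zd 2 t) s1 s2)"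

end

theory Submission
  imports Defs
begin

text \<open>With x = l k'(t), where k'(t)/k(t) tends to 1 and k(t) to 0, the bounds
  1 - x \<le> exp (-x) \<le> 1 - x + x^2 give, for every \<delta> > 0 and eventually in t,
  1 - (l + \<delta>) k(t) \<le> exp (-l k'(t)) \<le> 1 - max (l - \<delta>) 0 k(t).
  Generating functions are monotone on the unit square and H \<ge> 0, so H(t) Q(t; exp (-l k'(t)))
  is squeezed between H(t) Q at the linear arguments with l + \<delta> and l - \<delta>, whose limits are
  h at these shifted points; continuity of h then lets \<delta> tend to 0.\<close>

lemma exp_neg_le_one_minus_plus_square:
  fixes x :: real
  assumes "x \<ge> 0"
  shows "exp (- x) \<le> 1 - x + x\<^sup>2"
proof -
  have "exp (- x) = 1 / exp x"
    by (simp add: exp_minus field_simps)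
  also have "\<dots> \<le> 1 / (1 + x)"
    using assms exp_ge_add_one_self[of x] by (intro divide_left_mono) auto
  also have "\<dots> \<le> 1 - x + x\<^sup>2"
  proof -
    have "1 \<le> (1 - x + x\<^sup>2) * (1 + x)"
      using assms by (simp add: algebra_simps power2_eq_square)
    then show ?thesis
      using assms by (simp add: divide_simps)
  qed
  finally show ?thesis .
qed

lemma integrable_pgf2:
  fixes s1 s2 :: real
  assumes "\<bar>s1\<bar> \<le> 1" "\<bar>s2\<bar> \<le> 1"
  shows "integrable (measure_pmf p) (\<lambda>(a, b). s1 ^ a * s2 ^ b)"
proof (rule measure_pmf.integrable_const_bound[where B = 1])
  show "AE x in measure_pmf p. norm (case x of (a, b) \<Rightarrow> s1 ^ a * s2 ^ b) \<le> 1"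
    using assms by (auto simp: abs_mult power_abs intro!: AE_I2 mult_le_one power_le_one)
qed simp

lemma pgf2_mono:
  assumes "0 \<le> a1" "a1 \<le> b1" "b1 \<le> 1" "0 \<le> a2" "a2 \<le> b2" "b2 \<le> 1"
  shows "pgf2 p a1 a2 \<le> pgf2 p b1 b2"
  unfolding pgf2_def
  using assms
  by (intro integral_mono integrable_pgf2)
     (auto split: prod.splits intro!: mult_mono power_mono zero_le_power)

lemma exists_pos_of_eventually_at_right_0:
  assumes "\<forall>\<^sub>F \<delta> in at_right (0::real). P \<delta>"
  obtains \<delta> where "\<delta> > 0" "P \<delta>"
proof -
  have "\<forall>\<^sub>F \<delta> in at_right (0::real). 0 < \<delta> \<and> P \<delta>"
    using eventually_at_right_less assms by (rule eventually_conj)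
  then show ?thesis
    using that eventually_happens[of _ "at_right (0::real)"] by auto
qed

lemma eventually_pos_of_ratio_tendsto_1:
  fixes k k' :: "'a \<Rightarrow> real"
  assumes ratio: "((\<lambda>t. k' t / k t) \<longlongrightarrow> 1) F" and nonneg: "\<forall>\<^sub>F t in F. k t \<ge> 0"
  shows "\<forall>\<^sub>F t in F. k t > 0 \<and> k' t > 0"
proof -
  have "\<forall>\<^sub>F t in F. k' t / k t > 0"
    using ratio by (rule order_tendstoD) simp
  with nonneg show ?thesis
    by eventually_elim (auto simp: zero_less_divide_iff)
qed

lemma eventually_one_minus_le_exp_neg:
  fixes k k' :: "'a \<Rightarrow> real"
  assumes ratio: "((\<lambda>t. k' t / k t) \<longlongrightarrow> 1) F" and pos: "\<forall>\<^sub>F t in F. k t > 0"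
    and "l < m"
  shows "\<forall>\<^sub>F t in F. 1 - m * k t \<le> exp (- l * k' t)"
proof -
  have "((\<lambda>t. l * (k' t / k t)) \<longlongrightarrow> l * 1) F"
    using ratio by (intro tendsto_mult tendsto_const)
  then have "\<forall>\<^sub>F t in F. l * (k' t / k t) < m"
    using \<open>l < m\<close> by (intro order_tendstoD) auto
  with pos show ?thesis
  proof eventually_elim
    case (elim t)
    then have "l * k' t \<le> m * k t"
      by (simp add: field_simps)
    moreover have "1 - l * k' t \<le> exp (- l * k' t)"
      using exp_ge_add_one_self[of "- l * k' t"] by simp
    ultimately show ?case
      by linarith
  qed
qed

lemma eventually_exp_neg_le_one_minus:
  fixes k k' :: "'a \<Rightarrow> real"
  assumes k: "(k \<longlongrightarrow> 0) F" and ratio: "((\<lambda>t. k' t / k t) \<longlongrightarrow> 1) F"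
    and pos: "\<forall>\<^sub>F t in F. k t > 0 \<and> k' t > 0" and "0 \<le> l" "m < l"
  shows "\<forall>\<^sub>F t in F. exp (- l * k' t) \<le> 1 - max m 0 * k t"
proof -
  define q where "q t = k' t / k t" for t
  text \<open>With x = l k' = l q k, this is (x - x^2) / k tending to l.\<close>
  have "((\<lambda>t. l * q t - (l * q t)\<^sup>2 * k t) \<longlongrightarrow> l * 1 - (l * 1)\<^sup>2 * 0) F"
    using k ratio unfolding q_def by (intro tendsto_intros)
  then have "\<forall>\<^sub>F t in F. m < l * q t - (l * q t)\<^sup>2 * k t"
    using \<open>m < l\<close> by (intro order_tendstoD) auto
  with pos show ?thesis
  proof eventually_elim
    case (elim t)
    define x where "x = l * k' t"
    have x: "x = l * q t * k t" and "x \<ge> 0"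
      using elim \<open>0 \<le> l\<close> by (simp_all add: x_def q_def)
    have "m * k t < k t * (l * q t - (l * q t)\<^sup>2 * k t)"
      using elim by (simp add: mult.commute)
    also have "\<dots> = x - x\<^sup>2"
      by (simp add: x power2_eq_square algebra_simps)
    finally have "exp (- x) \<le> 1 - m * k t"
      using exp_neg_le_one_minus_plus_square[OF \<open>x \<ge> 0\<close>] by linarith
    moreover have "exp (- x) \<le> 1"
      using \<open>x \<ge> 0\<close> by simp
    ultimately show ?case
      by (simp add: x_def max_def)
  qed
qed

context
  fixes F :: "real \<Rightarrow> real \<Rightarrow> real \<Rightarrow> real" and g :: "real \<Rightarrow> real \<Rightarrow> real"
    and H k1 k2 k3 k4 :: "real \<Rightarrow> real"
  assumes F_mono: "\<And>t a1 a2 b1 b2. 0 \<le> a1 \<Longrightarrow> a1 \<le> b1 \<Longrightarrow> b1 \<le> 1 \<Longrightarrow>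
      0 \<le> a2 \<Longrightarrow> a2 \<le> b2 \<Longrightarrow> b2 \<le> 1 \<Longrightarrow> F t a1 a2 \<le> F t b1 b2"
    and H_nonneg: "\<forall>\<^sub>F t in at_top. H t \<ge> 0"
    and k1: "(k1 \<longlongrightarrow> 0) at_top" and k2: "(k2 \<longlongrightarrow> 0) at_top"
    and k1_nonneg: "\<forall>\<^sub>F t in at_top. k1 t \<ge> 0" and k2_nonneg: "\<forall>\<^sub>F t in at_top. k2 t \<ge> 0"
    and k3: "((\<lambda>t. k3 t / k1 t) \<longlongrightarrow> 1) at_top" and k4: "((\<lambda>t. k4 t / k2 t) \<longlongrightarrow> 1) at_top"
    and lim_linear: "\<And>l1 l2. 0 \<le> l1 \<Longrightarrow> 0 \<le> l2 \<Longrightarrow>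
      ((\<lambda>t. H t * (1 - F t (1 - l1 * k1 t) (1 - l2 * k2 t))) \<longlongrightarrow> g l1 l2) at_top"
    and g_cont: "continuous_on ({0..} \<times> {0..}) (\<lambda>(x, y). g x y)"
begin

lemma eventually_exp_scaling_gt:
  assumes "0 \<le> l1" "0 \<le> l2" "a < g l1 l2"
  shows "\<forall>\<^sub>F t in at_top. a < H t * (1 - F t (exp (- l1 * k3 t)) (exp (- l2 * k4 t)))"
proof -
  have "((\<lambda>\<delta>. (max (l1 - \<delta>) 0, max (l2 - \<delta>) 0)) \<longlongrightarrow> (max (l1 - 0) 0, max (l2 - 0) 0)) (at_right 0)"
    by (intro tendsto_intros)
  then have "((\<lambda>\<delta>. (\<lambda>(x, y). g x y) (max (l1 - \<delta>) 0, max (l2 - \<delta>) 0))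
      \<longlongrightarrow> (\<lambda>(x, y). g x y) (l1, l2)) (at_right 0)"
    using assms by (intro continuous_on_tendsto_compose[OF g_cont]) auto
  then have "\<forall>\<^sub>F \<delta> in at_right 0. a < g (max (l1 - \<delta>) 0) (max (l2 - \<delta>) 0)"
    using \<open>a < g l1 l2\<close> by (auto dest: order_tendstoD)
  then obtain \<delta> where "\<delta> > 0" and a: "a < g (max (l1 - \<delta>) 0) (max (l2 - \<delta>) 0)"
    by (rule exists_pos_of_eventually_at_right_0)
  have "\<forall>\<^sub>F t in at_top. a < H t * (1 - F t (1 - max (l1 - \<delta>) 0 * k1 t) (1 - max (l2 - \<delta>) 0 * k2 t))"
    using lim_linear a by (intro order_tendstoD) auto
  moreover have "\<forall>\<^sub>F t in at_top. exp (- l1 * k3 t) \<le> 1 - max (l1 - \<delta>) 0 * k1 t"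
    using k1 k3 eventually_pos_of_ratio_tendsto_1[OF k3 k1_nonneg] \<open>0 \<le> l1\<close> \<open>\<delta> > 0\<close>
    by (intro eventually_exp_neg_le_one_minus) auto
  moreover have "\<forall>\<^sub>F t in at_top. exp (- l2 * k4 t) \<le> 1 - max (l2 - \<delta>) 0 * k2 t"
    using k2 k4 eventually_pos_of_ratio_tendsto_1[OF k4 k2_nonneg] \<open>0 \<le> l2\<close> \<open>\<delta> > 0\<close>
    by (intro eventually_exp_neg_le_one_minus) auto
  ultimately show ?thesis
    using H_nonneg k1_nonneg k2_nonneg
  proof eventually_elim
    case (elim t)
    then have "F t (exp (- l1 * k3 t)) (exp (- l2 * k4 t))
        \<le> F t (1 - max (l1 - \<delta>) 0 * k1 t) (1 - max (l2 - \<delta>) 0 * k2 t)"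
      by (intro F_mono) auto
    with elim show ?case
      by (smt (verit) mult_left_mono)
  qed
qed

lemma eventually_exp_scaling_lt:
  assumes "0 \<le> l1" "0 \<le> l2" "g l1 l2 < a"
  shows "\<forall>\<^sub>F t in at_top. H t * (1 - F t (exp (- l1 * k3 t)) (exp (- l2 * k4 t))) < a"
proof -
  have "((\<lambda>\<delta>. (l1 + \<delta>, l2 + \<delta>)) \<longlongrightarrow> (l1 + 0, l2 + 0)) (at_right 0)"
    by (intro tendsto_intros)
  moreover have "\<forall>\<^sub>F \<delta> in at_right 0. (l1 + \<delta>, l2 + \<delta>) \<in> {0..} \<times> {0..}"
    using eventually_at_right_less[of 0] by eventually_elim (use assms in auto)
  ultimately have "((\<lambda>\<delta>. g (l1 + \<delta>) (l2 + \<delta>)) \<longlongrightarrow> g l1 l2) (at_right 0)"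
    using continuous_on_tendsto_compose[OF g_cont] assms by fastforce
  then have "\<forall>\<^sub>F \<delta> in at_right 0. g (l1 + \<delta>) (l2 + \<delta>) < a"
    using \<open>g l1 l2 < a\<close> by (rule order_tendstoD)
  then obtain \<delta> where "\<delta> > 0" and a: "g (l1 + \<delta>) (l2 + \<delta>) < a"
    by (rule exists_pos_of_eventually_at_right_0)
  have "\<forall>\<^sub>F t in at_top. H t * (1 - F t (1 - (l1 + \<delta>) * k1 t) (1 - (l2 + \<delta>) * k2 t)) < a"
    using lim_linear a assms \<open>\<delta> > 0\<close> by (intro order_tendstoD) auto
  moreover have "\<forall>\<^sub>F t in at_top. 1 - (l1 + \<delta>) * k1 t \<le> exp (- l1 * k3 t)"
    using k3 eventually_pos_of_ratio_tendsto_1[OF k3 k1_nonneg] \<open>\<delta> > 0\<close>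
    by (intro eventually_one_minus_le_exp_neg) (auto elim: eventually_mono)
  moreover have "\<forall>\<^sub>F t in at_top. 1 - (l2 + \<delta>) * k2 t \<le> exp (- l2 * k4 t)"
    using k4 eventually_pos_of_ratio_tendsto_1[OF k4 k2_nonneg] \<open>\<delta> > 0\<close>
    by (intro eventually_one_minus_le_exp_neg) (auto elim: eventually_mono)
  moreover have "\<forall>\<^sub>F t in at_top. (l1 + \<delta>) * k1 t < 1"
    using k1 by (intro order_tendstoD) (auto intro!: tendsto_mult_right_zero)
  moreover have "\<forall>\<^sub>F t in at_top. (l2 + \<delta>) * k2 t < 1"
    using k2 by (intro order_tendstoD) (auto intro!: tendsto_mult_right_zero)
  ultimately show ?thesis
    using H_nonneg eventually_pos_of_ratio_tendsto_1[OF k3 k1_nonneg]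
      eventually_pos_of_ratio_tendsto_1[OF k4 k2_nonneg]
  proof eventually_elim
    case (elim t)
    then have "F t (1 - (l1 + \<delta>) * k1 t) (1 - (l2 + \<delta>) * k2 t)
        \<le> F t (exp (- l1 * k3 t)) (exp (- l2 * k4 t))"
      using assms by (intro F_mono) auto
    with elim show ?case
      by (smt (verit) mult_left_mono)
  qed
qed

lemma tendsto_exp_scaling:
  assumes "0 \<le> l1" "0 \<le> l2"
  shows "((\<lambda>t. H t * (1 - F t (exp (- l1 * k3 t)) (exp (- l2 * k4 t)))) \<longlongrightarrow> g l1 l2) at_top"
  using eventually_exp_scaling_gt eventually_exp_scaling_lt assms by (intro order_tendstoI)

end

theorem lemma5:
  fixes G :: "nat \<Rightarrow> real measure" and off :: "nat \<Rightarrow> (nat \<times> nat) pmf"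
    and Zd :: "nat \<Rightarrow> real \<Rightarrow> (nat \<times> nat) pmf"
    and H k1 k2 k3 k4 :: "real \<Rightarrow> real" and h :: "real \<Rightarrow> real \<Rightarrow> real \<times> real"
  assumes BH: "bellman_harris G off Zd"
    and nonneg: "\<forall>t\<ge>0. H t \<ge> 0 \<and> k1 t \<ge> 0 \<and> k2 t \<ge> 0"
    and k1: "(k1 \<longlongrightarrow> 0) at_top" and k2: "(k2 \<longlongrightarrow> 0) at_top"
    and H: "filterlim H at_top at_top"
    and lim: "\<forall>l1\<ge>0. \<forall>l2\<ge>0.
       ((\<lambda>t. H t *\<^sub>R Qvec Zd t (1 - l1 * k1 t) (1 - l2 * k2 t)) \<longlongrightarrow> h l1 l2) at_top"
    and hcont: "continuous_on ({0..} \<times> {0..}) (\<lambda>(x, y). h x y)"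
    and k3: "((\<lambda>t. k3 t / k1 t) \<longlongrightarrow> 1) at_top"
    and k4: "((\<lambda>t. k4 t / k2 t) \<longlongrightarrow> 1) at_top"
  shows "\<forall>l1\<ge>0. \<forall>l2\<ge>0.
       ((\<lambda>t. H t *\<^sub>R Qvec Zd t (exp (- l1 * k3 t)) (exp (- l2 * k4 t))) \<longlongrightarrow> h l1 l2) at_top"
proof (intro allI impI)
  fix l1 l2 :: real
  assume l: "0 \<le> l1" "0 \<le> l2"
  have H_nonneg: "\<forall>\<^sub>F t in at_top. H t \<ge> 0"
    and k1_nonneg: "\<forall>\<^sub>F t in at_top. k1 t \<ge> 0" and k2_nonneg: "\<forall>\<^sub>F t in at_top. k2 t \<ge> 0"
    using nonneg by (auto simp: eventually_at_top_linorder)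
  have lim1: "((\<lambda>t. H t * (1 - pgf2 (Zd 1 t) (1 - a * k1 t) (1 - b * k2 t))) \<longlongrightarrow> fst (h a b)) at_top"
    and lim2: "((\<lambda>t. H t * (1 - pgf2 (Zd 2 t) (1 - a * k1 t) (1 - b * k2 t))) \<longlongrightarrow> snd (h a b)) at_top"
    if "0 \<le> a" "0 \<le> b" for a b
    using tendsto_fst[OF lim[rule_format, OF that]] tendsto_snd[OF lim[rule_format, OF that]]
    by (simp_all add: Qvec_def)
  have cont1: "continuous_on ({0..} \<times> {0..}) (\<lambda>(x, y). fst (h x y))"
    and cont2: "continuous_on ({0..} \<times> {0..}) (\<lambda>(x, y). snd (h x y))"
    using continuous_on_fst[OF hcont] continuous_on_snd[OF hcont] by (simp_all add: case_prod_unfold)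
  have "((\<lambda>t. H t * (1 - pgf2 (Zd 1 t) (exp (- l1 * k3 t)) (exp (- l2 * k4 t)))) \<longlongrightarrow> fst (h l1 l2)) at_top"
    by (rule tendsto_exp_scaling[where F = "\<lambda>t. pgf2 (Zd 1 t)",
          OF pgf2_mono H_nonneg k1 k2 k1_nonneg k2_nonneg k3 k4 lim1 cont1 l])
  moreover have "((\<lambda>t. H t * (1 - pgf2 (Zd 2 t) (exp (- l1 * k3 t)) (exp (- l2 * k4 t)))) \<longlongrightarrow> snd (h l1 l2)) at_top"
    by (rule tendsto_exp_scaling[where F = "\<lambda>t. pgf2 (Zd 2 t)",
          OF pgf2_mono H_nonneg k1 k2 k1_nonneg k2_nonneg k3 k4 lim2 cont2 l])
  ultimately show "((\<lambda>t. H t *\<^sub>R Qvec Zd t (exp (- l1 * k3 t)) (exp (- l2 * k4 t))) \<longlongrightarrow> h l1 l2) at_top"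
    using tendsto_Pair by (fastforce simp: Qvec_def)
qed

end
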